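(* Let $G$ be a connected simple graph without bridges whose edge set is identified with $[d+1]$, let $B_1,\dots,B_n$ be the bases (spanning trees) of its graphic matroid, all of cardinality $k$, and let $P=\operatorname{tconv}(V)$ with $V=(-e_{B_1},\dots,-e_{B_n})$. For pairwise distinct $i_1,\dots,i_r\in[d+1]$ write $e_{i_1,\dots,i_r}$ for the point $-e_{[d+1]\setminus\{i_1,\dots,i_r\}}$ of $\mathbb{T}^d$ (and $e_\emptyset=\mathbf{0}$). Call a sequence $(i_1,\dots,i_{d-k+1})$ of pairwise distinct elements of $[d+1]$ valid if $B=[d+1]\setminus\{i_1,\dots,i_{d-k+1}\}$ is a basis. Then the maximal bounded cells of the tropical complex $\mathcal{C}_V$ all have dimension $d-k+1$, and they are exactly the sets $\operatorname{tconv}(\mathbf{0},e_{i_1},e_{i_1,i_2},\dots,e_{i_1,\dots,i_{d-k+1}})$ for valid sequences $(i_1,\dots,i_{d-k+1})$; here the last point equals the generator $-e_B$ with $B=[d+1]\setminus\{i_1,\dots,i_{d-k+1}\}$. Moreover, if $(T^{(0)}_1,\dots,T^{(0)}_{d+1})=\operatorname{type}_V(\mathbf{0})$, then the type $(T_1,\dots,T_{d+1})$ of the relative interior of this cell is given by $T_{i_1}=T^{(0)}_{i_1}$, $T_{i_l}=T^{(0)}_{i_l}\setminus(T^{(0)}_{i_1}\cup\cdots\cup T^{(0)}_{i_{l-1}})$ for $2\le l\le d-k+1$, and $T_j=T^{(0)}_j\setminus(T^{(0)}_{i_1}\cup\cdots\cup T^{(0)}_{i_{d-k+1}})$ for all $j\in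 B$.
   Context: Tropical arithmetic is min-plus; $\mathbb{T}^d=\mathbb{R}^{d+1}/\mathbb{R}(1,\dots,1)$; $\operatorname{tconv}\{v_1,\dots,v_n\}=\{\bigoplus_l\lambda_l\odot v_l:\lambda_l\in\mathbb{R}\}$; $e_J=\sum_{i\in J}e_i$. For $m\in[d+1]$ let $\bar S_m=\{\xi\in\mathbb{T}^d:\xi_m=\min_i\xi_i\}$. For $V=(v_1,\dots,v_n)$ and $x\in\mathbb{T}^d$, $\operatorname{type}_V(x)=(T_1,\dots,T_{d+1})$ with $T_m=\{l\in[n]:v_l\in x+\bar S_m\}$. The cells $\{x:\operatorname{type}_V(x)=\mathcal{T}\}$ are relatively open polyhedra whose closures form a polyhedral subdivision $\mathcal{C}_V$ of $\mathbb{T}^d$; the bounded cells are those closed cells which are bounded sets, and the maximal bounded cells are those maximal under inclusion among bounded cells. *)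

theory Defs
  imports "HOL-Analysis.Analysis"
begin

text \<open>Finite simple graphs with vertex set Vs and edges indexed by the finite type 'e
  (the edge set is identified with [d+1], d+1 = CARD('e)); ends e is the set of
  two endpoints of the edge e.\<close>

definition simple_graph :: "'v set \<Rightarrow> ('e::finite \<Rightarrow> 'v set) \<Rightarrow> bool" where
  "simple_graph Vs ends \<longleftrightarrow> finite Vs \<and> inj ends \<and>
     (\<forall>e. ends e \<subseteq> Vs \<and> card (ends e) = 2)"

definition adj :: "('e \<Rightarrow> 'v set) \<Rightarrow> 'e set \<Rightarrow> 'v \<Rightarrow> 'v \<Rightarrow> bool" where
  "adj ends F u w \<longleftrightarrow> (\<exists>e\<in>F. ends e = {u, w})"

definition connected_sub :: "'v set \<Rightarrow> ('e \<Rightarrow> 'v set) \<Rightarrow> 'e set \<Rightarrow> bool" where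
  "connected_sub Vs ends F \<longleftrightarrow> (\<forall>u\<in>Vs. \<forall>w\<in>Vs. (adj ends F)\<^sup>*\<^sup>* u w)"

definition graph_connected :: "'v set \<Rightarrow> ('e \<Rightarrow> 'v set) \<Rightarrow> bool" where
  "graph_connected Vs ends \<longleftrightarrow> connected_sub Vs ends UNIV"

definition is_bridge :: "'v set \<Rightarrow> ('e \<Rightarrow> 'v set) \<Rightarrow> 'e \<Rightarrow> bool" where
  "is_bridge Vs ends e \<longleftrightarrow> \<not> connected_sub Vs ends (UNIV - {e})"

definition acyclic_edges :: "('e \<Rightarrow> 'v set) \<Rightarrow> 'e set \<Rightarrow> bool" where
  "acyclic_edges ends F \<longleftrightarrow>
     (\<forall>e\<in>F. \<forall>u w. ends e = {u, w} \<longrightarrow> \<not> (adj ends (F - {e}))\<^sup>*\<^sup>* u w)"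

definition spanning_tree :: "'v set \<Rightarrow> ('e \<Rightarrow> 'v set) \<Rightarrow> 'e set \<Rightarrow> bool" where
  "spanning_tree Vs ends F \<longleftrightarrow> connected_sub Vs ends F \<and> acyclic_edges ends F"

text \<open>Subsets of T^d are represented by their (translation-invariant) preimages in
  real^'e.  Negated indicator vector -e_J.\<close>
definition neg_ind :: "'e set \<Rightarrow> real^'e::finite" where
  "neg_ind J = (\<chi> i. if i \<in> J then -1 else 0)"

definition tconv :: "(real^'e::finite) set \<Rightarrow> (real^'e) set" where
  "tconv V = {x. \<exists>lam::real^'e \<Rightarrow> real. \<forall>i. x $ i = (MIN v\<in>V. lam v + v $ i)}"

definition Sbar :: "'e::finite \<Rightarrow> (real^'e) set" where
  "Sbar m = {\<xi>. \<forall>i. \<xi> $ m \<le> \<xi> $ i}"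

definition ttype :: "nat \<Rightarrow> (nat \<Rightarrow> real^'e::finite) \<Rightarrow> real^'e \<Rightarrow> 'e \<Rightarrow> nat set" where
  "ttype n v x m = {l \<in> {1..n}. v l \<in> (\<lambda>\<xi>. x + \<xi>) ` Sbar m}"

definition tcells :: "nat \<Rightarrow> (nat \<Rightarrow> real^'e::finite) \<Rightarrow> (real^'e) set set" where
  "tcells n v = {closure {x. ttype n v x = T} | T. \<exists>x. ttype n v x = T}"

definition tbounded :: "(real^'e::finite) set \<Rightarrow> bool" where
  "tbounded S \<longleftrightarrow> (\<exists>c. \<forall>x\<in>S. \<forall>i j. \<bar>x $ i - x $ j\<bar> \<le> c)"

definition bounded_cells :: "nat \<Rightarrow> (nat \<Rightarrow> real^'e::finite) \<Rightarrow> (real^'e) set set" where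
  "bounded_cells n v = {C \<in> tcells n v. tbounded C}"

definition max_bounded_cells :: "nat \<Rightarrow> (nat \<Rightarrow> real^'e::finite) \<Rightarrow> (real^'e) set set" where
  "max_bounded_cells n v =
     {C \<in> bounded_cells n v. \<forall>C'\<in>bounded_cells n v. C \<subseteq> C' \<longrightarrow> C' = C}"

definition tdim :: "(real^'e::finite) set \<Rightarrow> int" where
  "tdim S = aff_dim S - 1"

definition tpt :: "'e::finite list \<Rightarrow> real^'e" where
  "tpt is = neg_ind (UNIV - set is)"

end

theory Submission
  imports Defs
begin

text \<open>Since \<open>-e\<^sub>B \<in> x + Sbar m\<close> means that \<open>x + e\<^sub>B\<close> is maximal at \<open>m\<close>, a type records
  for every spanning tree \<open>B\<close> the coordinates maximising \<open>x + e\<^sub>B\<close>, and the closed cells are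
  cut out by these maximality conditions. A cell is bounded only if every coordinate is a
  maximiser for some tree; taking \<open>B\<close> at a minimal coordinate shows that \<open>x\<close> is constant on
  \<open>B\<close>, lies within distance one above it, and hence lies in the chain cell of the complement of
  \<open>B\<close> sorted decreasingly. Conversely, any two edges \<open>a, b\<close> lie in a spanning tree inside
  \<open>B \<union> {a, b}\<close>; this pair exchange shows that the closed cell of an interior point of a chain
  cell is the whole chain cell. So the chain cells of valid sequences are exactly the maximal
  bounded cells; they are order simplices of dimension \<open>length L\<close>, and the types of their
  relative interiors are read off from the strict ordering of the coordinates.\<close>

subsection \<open>Spanning trees of a bridgeless graph\<close>

lemma adj_sym: "adj ends F u w \<Longrightarrow> adj ends F w u"
  unfolding adj_def by (auto simp: insert_commute)

lemma adj_rtranclp_sym: "(adj ends F)\<^sup>*\<^sup>* u w \<Longrightarrow> (adj ends F)\<^sup>*\<^sup>* w u"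
  by (induction rule: rtranclp_induct) (auto intro: converse_rtranclp_into_rtranclp adj_sym)

lemma adj_rtranclp_mono: "F \<subseteq> F' \<Longrightarrow> (adj ends F)\<^sup>*\<^sup>* u w \<Longrightarrow> (adj ends F')\<^sup>*\<^sup>* u w"
  by (rule mono_rtranclp[rule_format, of "adj ends F"]) (auto simp: adj_def)

lemma adj_rtranclp_insert:
  assumes "(adj ends (insert e F))\<^sup>*\<^sup>* a b" and "ends e = {u, w}"
  shows "(adj ends F)\<^sup>*\<^sup>* a b \<or> (adj ends F)\<^sup>*\<^sup>* a u \<and> (adj ends F)\<^sup>*\<^sup>* w b
         \<or> (adj ends F)\<^sup>*\<^sup>* a w \<and> (adj ends F)\<^sup>*\<^sup>* u b"
  using assms(1)
proof (induction rule: rtranclp_induct)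
  case (step y z)
  from step(2) obtain f where f: "f \<in> insert e F" "ends f = {y, z}" unfolding adj_def by auto
  show ?case
  proof (cases "f \<in> F")
    case True
    then have "adj ends F y z" unfolding adj_def using f by auto
    then show ?thesis using step(3) by (meson rtranclp.rtrancl_into_rtrancl)
  next
    case False
    then have "{y, z} = {u, w}" using f assms(2) by auto
    then have "y = u \<and> z = w \<or> y = w \<and> z = u" by (metis doubleton_eq_iff)
    then show ?thesis using step(3) by (auto intro: adj_rtranclp_sym)
  qed
qed simp

lemma adj_rtranclp_singleton:
  assumes "(adj ends {g})\<^sup>*\<^sup>* x y" and "card (ends g) = 2"
  shows "x = y \<or> ends g = {x, y}"
  using assms(1)
proof (induction rule: rtranclp_induct)
  case (step y z)
  then have g: "ends g = {y, z}" unfolding adj_def by auto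
  with assms(2) have "y \<noteq> z" by auto
  with g step(3) show ?case by (auto simp: doubleton_eq_iff)
qed simp

lemma acyclic_edges_insert:
  assumes ac: "acyclic_edges ends B" and eB: "e \<notin> B" and ee: "ends e = {u, w}"
    and nc: "\<not> (adj ends B)\<^sup>*\<^sup>* u w"
  shows "acyclic_edges ends (insert e B)"
  unfolding acyclic_edges_def
proof (intro ballI allI impI notI)
  fix f a b
  assume f: "f \<in> insert e B" and fab: "ends f = {a, b}"
    and c: "(adj ends (insert e B - {f}))\<^sup>*\<^sup>* a b"
  show False
  proof (cases "f = e")
    case True
    then have "insert e B - {f} = B" using eB by auto
    then have "(adj ends B)\<^sup>*\<^sup>* a b" using c by simp
    moreover have "(a = u \<and> b = w) \<or> (a = w \<and> b = u)" using fab ee True by (metis doubleton_eq_iff)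
    ultimately show False using nc adj_rtranclp_sym[of ends B a b] by auto
  next
    case False
    then have fB: "f \<in> B" using f by auto
    have eq: "insert e B - {f} = insert e (B - {f})" using False by auto
    have nab: "\<not> (adj ends (B - {f}))\<^sup>*\<^sup>* a b" using ac fB fab unfolding acyclic_edges_def by blast
    have adjab: "adj ends B a b" using fB fab unfolding adj_def by auto
    have sub: "B - {f} \<subseteq> B" by auto
    from adj_rtranclp_insert[OF c[unfolded eq] ee] nab
    have "((adj ends (B - {f}))\<^sup>*\<^sup>* a u \<and> (adj ends (B - {f}))\<^sup>*\<^sup>* w b)
         \<or> ((adj ends (B - {f}))\<^sup>*\<^sup>* a w \<and> (adj ends (B - {f}))\<^sup>*\<^sup>* u b)" by blast
    then have "((adj ends B)\<^sup>*\<^sup>* a u \<and> (adj ends B)\<^sup>*\<^sup>* w b)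
         \<or> ((adj ends B)\<^sup>*\<^sup>* a w \<and> (adj ends B)\<^sup>*\<^sup>* u b)"
      using adj_rtranclp_mono[OF sub, of ends a u] adj_rtranclp_mono[OF sub, of ends w b]
        adj_rtranclp_mono[OF sub, of ends a w] adj_rtranclp_mono[OF sub, of ends u b] by blast
    then show False
    proof
      assume h: "(adj ends B)\<^sup>*\<^sup>* a u \<and> (adj ends B)\<^sup>*\<^sup>* w b"
      have "(adj ends B)\<^sup>*\<^sup>* u a" using h adj_rtranclp_sym[of ends B a u] by blast
      then have "(adj ends B)\<^sup>*\<^sup>* u b" using adjab by (meson rtranclp.rtrancl_into_rtrancl)
      moreover have "(adj ends B)\<^sup>*\<^sup>* b w" using h adj_rtranclp_sym[of ends B w b] by blast
      ultimately show False using nc by (meson rtranclp_trans)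
    next
      assume h: "(adj ends B)\<^sup>*\<^sup>* a w \<and> (adj ends B)\<^sup>*\<^sup>* u b"
      have "(adj ends B)\<^sup>*\<^sup>* b a" using adj_sym[OF adjab] by (rule r_into_rtranclp)
      then have "(adj ends B)\<^sup>*\<^sup>* u a" using h by (meson rtranclp_trans)
      then have "(adj ends B)\<^sup>*\<^sup>* u w" using h by (meson rtranclp_trans)
      then show False using nc by simp
    qed
  qed
qed

text \<open>A maximal acyclic edge set between \<open>I\<close> and \<open>F\<close> is a spanning tree.\<close>

lemma spanning_tree_between:
  fixes ends :: "'e::finite \<Rightarrow> 'v set"
  assumes "I \<subseteq> F" and "acyclic_edges ends I" and connected: "connected_sub Vs ends F"
  shows "\<exists>B. I \<subseteq> B \<and> B \<subseteq> F \<and> spanning_tree Vs ends B"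
proof -
  let ?S = "{B. I \<subseteq> B \<and> B \<subseteq> F \<and> acyclic_edges ends B}"
  have "I \<in> ?S" using assms by blast
  moreover have "card B < Suc CARD('e)" for B :: "'e set"
    using card_mono[OF finite subset_UNIV, of B] by simp
  ultimately obtain B where B: "B \<in> ?S" and B_max: "\<And>B'. B' \<in> ?S \<Longrightarrow> card B' \<le> card B"
    using ex_has_greatest_nat[of "\<lambda>B. B \<in> ?S" I card "Suc CARD('e)"] by blast
  have F_in_B: "(adj ends B)\<^sup>*\<^sup>* y z" if yz: "adj ends F y z" for y z
  proof (rule ccontr)
    assume nc: "\<not> (adj ends B)\<^sup>*\<^sup>* y z"
    obtain e where e: "e \<in> F" "ends e = {y, z}" using yz unfolding adj_def by blast
    then have "e \<notin> B" using nc unfolding adj_def by blast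
    then have "insert e B \<in> ?S" using acyclic_edges_insert[of ends B e y z] B e nc by auto
    then show False using B_max[of "insert e B"] \<open>e \<notin> B\<close> by simp
  qed
  have "(adj ends B)\<^sup>*\<^sup>* u w" if "(adj ends F)\<^sup>*\<^sup>* u w" for u w
    using that
  proof (induction rule: rtranclp_induct)
    case (step y z)
    then show ?case using F_in_B[OF step(2)] by (meson rtranclp_trans)
  qed simp
  then have "connected_sub Vs ends B" using connected unfolding connected_sub_def by blast
  then show ?thesis using B unfolding spanning_tree_def by blast
qed

locale bridgeless_graph =
  fixes Vs :: "'v set" and ends :: "'e::finite \<Rightarrow> 'v set"
  assumes simple: "simple_graph Vs ends"
    and connected: "graph_connected Vs ends"
    and no_bridge: "\<forall>e. \<not> is_bridge Vs ends e"
begin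

lemma edge_ends: obtains u w where "ends e = {u, w}" "u \<noteq> w" "u \<in> Vs" "w \<in> Vs"
  using simple unfolding simple_graph_def by (metis card_2_iff insert_subset)

lemma spanning_tree_exists: "\<exists>B. spanning_tree Vs ends B"
  using spanning_tree_between[of "{}" UNIV ends Vs] connected
  unfolding graph_connected_def acyclic_edges_def by blast

lemma spanning_tree_nonempty:
  assumes "spanning_tree Vs ends B" shows "B \<noteq> {}"
proof
  assume "B = {}"
  obtain e :: 'e where True by simp
  obtain u w where "ends e = {u, w}" "u \<noteq> w" "u \<in> Vs" "w \<in> Vs" by (rule edge_ends)
  moreover have "(adj ends {})\<^sup>*\<^sup>* x y \<Longrightarrow> x = y" for x y
    by (induction rule: rtranclp_induct) (auto simp: adj_def)
  ultimately show False using assms \<open>B = {}\<close> unfolding spanning_tree_def connected_sub_def by blast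
qed

lemma spanning_tree_not_UNIV:
  assumes "spanning_tree Vs ends B" shows "B \<noteq> UNIV"
proof
  assume "B = UNIV"
  obtain e :: 'e where True by simp
  obtain u w where "ends e = {u, w}" "u \<in> Vs" "w \<in> Vs" by (rule edge_ends)
  moreover have "connected_sub Vs ends (UNIV - {e})" using no_bridge unfolding is_bridge_def by blast
  ultimately show False using assms \<open>B = UNIV\<close>
    unfolding spanning_tree_def acyclic_edges_def connected_sub_def by blast
qed

lemma spanning_tree_through_two_edges:
  assumes "spanning_tree Vs ends B0" and "a \<noteq> b"
  shows "\<exists>B. spanning_tree Vs ends B \<and> a \<in> B \<and> b \<in> B \<and> B \<subseteq> B0 \<union> {a, b}"
proof -
  have "acyclic_edges ends {a, b}"
    unfolding acyclic_edges_def
  proof (intro ballI allI impI notI)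
    fix f x y assume f: "f \<in> {a, b}" and fxy: "ends f = {x, y}"
      and path: "(adj ends ({a, b} - {f}))\<^sup>*\<^sup>* x y"
    obtain g where g: "{a, b} - {f} = {g}" "g \<noteq> f" using f \<open>a \<noteq> b\<close> by auto
    obtain u w where "ends f = {u, w}" "u \<noteq> w" by (rule edge_ends)
    then have "x \<noteq> y" using fxy by (auto simp: doubleton_eq_iff)
    then have "ends g = ends f"
      using adj_rtranclp_singleton[of ends g x y] path g fxy simple
      unfolding simple_graph_def by auto
    then show False using g simple unfolding simple_graph_def inj_def by auto
  qed
  moreover have "connected_sub Vs ends (B0 \<union> {a, b})"
    using assms(1) adj_rtranclp_mono[of B0 "B0 \<union> {a, b}" ends]
    unfolding spanning_tree_def connected_sub_def by blast
  ultimately show ?thesis using spanning_tree_between[of "{a, b}" "B0 \<union> {a, b}" ends Vs] by blast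
qed

end

subsection \<open>Types as maximality conditions\<close>

definition attains_max :: "real^'e \<Rightarrow> 'e set \<Rightarrow> 'e \<Rightarrow> bool" where
  "attains_max x B m \<longleftrightarrow> (\<forall>i. x$i + indicator B i \<le> x$m + indicator B m)"

lemma mem_translation_image:
  fixes x y :: "'a::ab_group_add"
  shows "y \<in> (\<lambda>\<xi>. x + \<xi>) ` S \<longleftrightarrow> y - x \<in> S"
  by (metis (no_types, lifting) add_diff_cancel_left' diff_add_cancel image_iff)

lemma ttype_neg_ind:
  "ttype n (\<lambda>l. neg_ind (Bs l)) x m = {l\<in>{1..n}. attains_max x (Bs l) m}"
proof -
  have "neg_ind B - x \<in> Sbar m \<longleftrightarrow> attains_max x B m" for B
    unfolding Sbar_def attains_max_def neg_ind_def indicator_def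
    by (auto simp: algebra_simps)
  then show ?thesis unfolding ttype_def mem_translation_image by simp
qed

lemma attains_max_exists: "\<exists>m. attains_max (x::real^'e::finite) B m"
proof -
  let ?f = "\<lambda>i. x$i + indicator B i"
  have "Max (range ?f) \<in> range ?f" by (rule Max_in) auto
  then obtain m where m: "Max (range ?f) = ?f m" by (rule imageE)
  have "?f i \<le> Max (range ?f)" for i by (rule Max_ge) auto
  then show ?thesis unfolding attains_max_def using m by metis
qed

definition cell_closure :: "'e set set \<Rightarrow> real^'e \<Rightarrow> (real^'e) set" where
  "cell_closure BB x0 = {y. \<forall>B\<in>BB. \<forall>m. attains_max x0 B m \<longrightarrow> attains_max y B m}"

lemma closed_attains_max: "closed {y::real^'e::finite. attains_max y B m}"
proof -
  have "{y::real^'e. attains_max y B m} = (\<Inter>i. {y. y$i + indicator B i \<le> y$m + indicator B m})"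
    unfolding attains_max_def by auto
  moreover have "closed {y::real^'e. y$i + indicator B i \<le> y$m + indicator B m}" for i
    by (intro closed_Collect_le continuous_intros)
  ultimately show ?thesis by auto
qed

lemma closed_cell_closure: "closed (cell_closure BB (x0::real^'e::finite))"
proof -
  have "cell_closure BB x0 = (\<Inter>B\<in>BB. \<Inter>m\<in>{m. attains_max x0 B m}. {y. attains_max y B m})"
    unfolding cell_closure_def by auto
  moreover have "closed (\<Inter>B\<in>BB. \<Inter>m\<in>{m. attains_max x0 B m}. {y. attains_max y B m})"
    by (auto intro!: closed_INT closed_attains_max)
  ultimately show ?thesis by simp
qed

lemma attains_max_segment:
  fixes x0 y :: "real^'e::finite"
  assumes ext: "\<forall>m. attains_max x0 B m \<longrightarrow> attains_max y B m" and s: "0 < s" "s \<le> 1"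
  shows "attains_max (y + s *\<^sub>R (x0 - y)) B m \<longleftrightarrow> attains_max x0 B m"
proof
  let ?z = "y + s *\<^sub>R (x0 - y)"
  have zc: "?z $ i = (1 - s) * y$i + s * x0$i" for i by (simp add: algebra_simps)
  assume z: "attains_max ?z B m"
  show "attains_max x0 B m"
  proof (rule ccontr)
    assume nm: "\<not> attains_max x0 B m"
    then obtain i where i: "x0$i + indicator B i > x0$m + indicator B m" unfolding attains_max_def by (auto simp: not_le)
    obtain m' where m': "attains_max x0 B m'" using attains_max_exists by blast
    then have ym': "attains_max y B m'" using ext by blast
    have "x0$m' + indicator B m' \<ge> x0$i + indicator B i" using m' unfolding attains_max_def by blast
    then have a: "x0$m' + indicator B m' > x0$m + indicator B m" using i by linarith
    have b: "y$m + indicator B m \<le> y$m' + indicator B m'" using ym' unfolding attains_max_def by blast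
    have c: "?z$m' + indicator B m' \<le> ?z$m + indicator B m" using z unfolding attains_max_def by blast
    have e1: "(1 - s) * (y$m + indicator B m) \<le> (1 - s) * (y$m' + indicator B m')"
      using b s by (intro mult_left_mono) auto
    have e2: "s * (x0$m + indicator B m) < s * (x0$m' + indicator B m')"
      using a s by (intro mult_strict_left_mono) auto
    have "?z$m + indicator B m = (1 - s) * (y$m + indicator B m) + s * (x0$m + indicator B m)"
      unfolding zc by (simp add: algebra_simps)
    moreover have "?z$m' + indicator B m' = (1 - s) * (y$m' + indicator B m') + s * (x0$m' + indicator B m')"
      unfolding zc by (simp add: algebra_simps)
    ultimately show False using c e1 e2 by linarith
  qed
next
  let ?z = "y + s *\<^sub>R (x0 - y)"
  have zc: "?z $ i + indicator B i = (1 - s) * (y$i + indicator B i) + s * (x0$i + indicator B i)" for i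
    by (simp add: algebra_simps)
  assume "attains_max x0 B m"
  then have hx: "x0$i + indicator B i \<le> x0$m + indicator B m" and hy: "y$i + indicator B i \<le> y$m + indicator B m" for i
    using ext unfolding attains_max_def by blast+
  show "attains_max ?z B m" unfolding attains_max_def
  proof
    fix i
    have "(1 - s) * (y$i + indicator B i) \<le> (1 - s) * (y$m + indicator B m)"
      using hy[of i] s by (intro mult_left_mono) auto
    moreover have "s * (x0$i + indicator B i) \<le> s * (x0$m + indicator B m)"
      using hx[of i] s by (intro mult_left_mono) auto
    ultimately show "?z$i + indicator B i \<le> ?z$m + indicator B m" unfolding zc by linarith
  qed
qed

lemma closure_type_class:
  fixes x0 :: "real^'e::finite"
  shows "closure {x. \<forall>B\<in>BB. \<forall>m. attains_max x B m = attains_max x0 B m} = cell_closure BB x0"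
proof
  show "closure {x. \<forall>B\<in>BB. \<forall>m. attains_max x B m = attains_max x0 B m} \<subseteq> cell_closure BB x0"
  proof (rule closure_minimal)
    show "{x. \<forall>B\<in>BB. \<forall>m. attains_max x B m = attains_max x0 B m} \<subseteq> cell_closure BB x0"
      unfolding cell_closure_def by auto
  qed (rule closed_cell_closure)
next
  show "cell_closure BB x0 \<subseteq> closure {x. \<forall>B\<in>BB. \<forall>m. attains_max x B m = attains_max x0 B m}"
  proof
    fix y assume y: "y \<in> cell_closure BB x0"
    let ?S = "{x. \<forall>B\<in>BB. \<forall>m. attains_max x B m = attains_max x0 B m}"
    have zS: "y + s *\<^sub>R (x0 - y) \<in> ?S" if "0 < s" "s \<le> 1" for s
      using attains_max_segment[OF _ that] y unfolding cell_closure_def by blast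
    show "y \<in> closure ?S"
    proof (cases "y = x0")
      case True
      then have "y \<in> ?S" by blast
      then show ?thesis by (rule closure_subset[THEN subsetD])
    next
      case False
      have "open_segment y x0 \<subseteq> ?S"
      proof
        fix z assume "z \<in> open_segment y x0"
        then obtain u where u: "0 < u" "u < 1" "z = (1 - u) *\<^sub>R y + u *\<^sub>R x0"
          unfolding in_segment by blast
        have "y + u *\<^sub>R (x0 - y) \<in> ?S" using u(1,2) by (intro zS) auto
        moreover have "z = y + u *\<^sub>R (x0 - y)" using u(3) by (simp add: algebra_simps)
        ultimately show "z \<in> ?S" by simp
      qed
      then have "closure (open_segment y x0) \<subseteq> closure ?S" by (rule closure_mono)
      then have "closed_segment y x0 \<subseteq> closure ?S" using closure_open_segment[of y x0] False by simp
      then show ?thesis using ends_in_segment(1) by blast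
    qed
  qed
qed

subsection \<open>Chain cells\<close>

text \<open>\<open>chain_cell L\<close> is the polytope tconv(0, e_i1, e_i1i2, ...) of \<open>L = [i1, i2, ...]\<close> in
  inequality form (see \<open>tconv_chain_vertices_eq\<close>): constant \<open>c\<close> off \<open>L\<close>, within
  \<open>[c, c + 1]\<close> on \<open>L\<close>, and decreasing along \<open>L\<close>.\<close>

definition chain_cell :: "'e::finite list \<Rightarrow> (real^'e) set" where
  "chain_cell L = {x. \<exists>c. (\<forall>j. j \<notin> set L \<longrightarrow> x$j = c) \<and>
      (\<forall>p<length L. c \<le> x$(L!p) \<and> x$(L!p) \<le> c + 1) \<and>
      (\<forall>p q. p < q \<longrightarrow> q < length L \<longrightarrow> x$(L!q) \<le> x$(L!p))}"

definition strict_chain :: "'e::finite list \<Rightarrow> real^'e \<Rightarrow> real \<Rightarrow> bool" where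
  "strict_chain L x c \<longleftrightarrow> (\<forall>j. j \<notin> set L \<longrightarrow> x$j = c) \<and>
      (\<forall>p<length L. c < x$(L!p) \<and> x$(L!p) < c + 1) \<and>
      (\<forall>p q. p < q \<longrightarrow> q < length L \<longrightarrow> x$(L!q) < x$(L!p))"

definition chain_center :: "'e::finite list \<Rightarrow> real^'e" where
  "chain_center L = (\<chi> i. if i \<in> set L then real (length L - (THE p. p < length L \<and> L!p = i)) / real (length L + 1) else 0)"

lemma chain_center_nth:
  assumes "distinct L" "p < length L"
  shows "chain_center L $ (L!p) = real (length L - p) / real (length L + 1)"
proof -
  have "(THE q. q < length L \<and> L!q = L!p) = p"
    using assms by (auto simp: nth_eq_iff_index_eq)
  then show ?thesis unfolding chain_center_def using assms by simp
qed

lemma chain_center_outside: "j \<notin> set L \<Longrightarrow> chain_center L $ j = 0"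
  unfolding chain_center_def by simp

lemma chain_center_le_iff:
  assumes "distinct L" "p < length L" "q < length L"
  shows "chain_center L $ (L!q) \<le> chain_center L $ (L!p) \<longleftrightarrow> p \<le> q"
proof -
  have "real (length L - q) / real (length L + 1) \<le> real (length L - p) / real (length L + 1)
     \<longleftrightarrow> real (length L - q) \<le> real (length L - p)"
    by (simp add: divide_le_cancel)
  then show ?thesis using assms by (simp add: chain_center_nth)
qed

lemma chain_center_bounds:
  assumes "distinct L" "p < length L"
  shows "0 < chain_center L $ (L!p)" "chain_center L $ (L!p) < 1"
  using assms by (auto simp: chain_center_nth)

lemma strict_chain_center: "distinct L \<Longrightarrow> strict_chain L (chain_center L) 0"
  unfolding strict_chain_def
  by (auto simp: chain_center_outside chain_center_bounds chain_center_nth divide_strict_right_mono)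

lemma strict_chain_bounds:
  assumes "strict_chain L x c"
  shows "c \<le> x$i \<and> x$i < c + 1"
proof (cases "i \<in> set L")
  case True
  then obtain p where "p < length L" "i = L!p" by (auto simp: in_set_conv_nth)
  then show ?thesis using assms unfolding strict_chain_def by force
next
  case False then show ?thesis using assms unfolding strict_chain_def by simp
qed

lemma chain_cell_bounds:
  fixes x :: "real^'e::finite"
  assumes "\<forall>j. j \<notin> set L \<longrightarrow> x$j = c" "\<forall>p<length L. c \<le> x$(L!p) \<and> x$(L!p) \<le> c + 1"
  shows "c \<le> x$i \<and> x$i \<le> c + 1"
proof (cases "i \<in> set L")
  case True
  then obtain p where "p < length L" "i = L!p" by (auto simp: in_set_conv_nth)
  then show ?thesis using assms by force
next
  case False then show ?thesis using assms by auto
qed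

lemma attains_max_iff:
  assumes range: "\<forall>i. c \<le> x$i \<and> x$i < c + 1" and "B \<noteq> {}"
  shows "attains_max x B m \<longleftrightarrow> m \<in> B \<and> (\<forall>i\<in>B. x$i \<le> x$m)"
proof
  assume max: "attains_max x B m"
  note max_at = max[unfolded attains_max_def, rule_format]
  obtain i where "i \<in> B" using \<open>B \<noteq> {}\<close> by blast
  have "m \<in> B"
  proof (rule ccontr)
    assume "m \<notin> B"
    then have "x$i + 1 \<le> x$m" using max_at[of i] \<open>i \<in> B\<close> by simp
    then show False using range[rule_format, of i] range[rule_format, of m] by linarith
  qed
  moreover have "x$i \<le> x$m" if "i \<in> B" for i using max_at[of i] that \<open>m \<in> B\<close> by simp
  ultimately show "m \<in> B \<and> (\<forall>i\<in>B. x$i \<le> x$m)" by blast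
next
  assume m: "m \<in> B \<and> (\<forall>i\<in>B. x$i \<le> x$m)"
  show "attains_max x B m"
    unfolding attains_max_def
  proof
    fix i
    show "x$i + indicator B i \<le> x$m + indicator B m"
      using m range[rule_format, of i] range[rule_format, of m] by (cases "i \<in> B") auto
  qed
qed


subsection \<open>Chain cells as tropical polytopes\<close>

lemma tpt_component: "tpt L $ i = (if i \<in> set L then 0 else -1)"
  unfolding tpt_def neg_ind_def by simp

lemma nth_in_set_take_iff:
  assumes "distinct L" "q < length L"
  shows "L!q \<in> set (take j L) \<longleftrightarrow> q < j"
proof
  assume "L!q \<in> set (take j L)"
  then obtain t where t: "t < length (take j L)" "take j L ! t = L!q" by (auto simp: in_set_conv_nth)
  then have "L!t = L!q" "t < length L" "t < j" by auto
  then have "t = q" using assms by (simp add: nth_eq_iff_index_eq)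
  then show "q < j" using t by simp
next
  assume "q < j"
  then have "take j L ! q = L!q" "q < length (take j L)" using assms by auto
  then show "L!q \<in> set (take j L)" by (metis nth_mem)
qed

definition chain_vertices :: "'e::finite list \<Rightarrow> (real^'e) set" where
  "chain_vertices L = insert 0 {tpt (take j L) | j. j \<in> {1..length L}}"

lemma finite_chain_vertices: "finite (chain_vertices L)"
proof -
  have "{tpt (take j L) | j. j \<in> {1..length L}} = (\<lambda>j. tpt (take j L)) ` {1..length L}" by auto
  then show ?thesis unfolding chain_vertices_def by simp
qed

lemma chain_vertices_nonempty: "chain_vertices L \<noteq> {}" unfolding chain_vertices_def by simp

lemma chain_vertices_cases:
  assumes "w \<in> chain_vertices L"
  shows "w = 0 \<or> (\<exists>j. 1 \<le> j \<and> j \<le> length L \<and> w = tpt (take j L))"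
  using assms unfolding chain_vertices_def by auto

lemma chain_vertex_outside: "w \<in> chain_vertices L \<Longrightarrow> j \<notin> set L \<Longrightarrow> w$j = (if w = 0 then 0 else -1)"
proof -
  assume w: "w \<in> chain_vertices L" and j: "j \<notin> set L"
  show ?thesis
  proof (cases "w = 0")
    case True then show ?thesis by simp
  next
    case False
    then obtain t where t: "w = tpt (take t L)" using chain_vertices_cases[OF w] by blast
    have "j \<notin> set (take t L)" using j in_set_takeD by metis
    then show ?thesis using t False by (simp add: tpt_component)
  qed
qed

lemma chain_vertex_values: "w \<in> chain_vertices L \<Longrightarrow> w$i = 0 \<or> w$i = -1"
  using chain_vertices_cases[of w L] by (auto simp: tpt_component split: if_splits)

lemma chain_vertex_outside_le: "w \<in> chain_vertices L \<Longrightarrow> j \<notin> set L \<Longrightarrow> w$j \<le> w$i"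
  using chain_vertex_outside[of w L j] chain_vertex_values[of w L i] by (cases "w = 0") auto

lemma chain_vertex_mono:
  assumes "distinct L" "w \<in> chain_vertices L" "p < q" "q < length L"
  shows "w$(L!q) \<le> w$(L!p)"
proof (cases "w = 0")
  case True then show ?thesis by simp
next
  case False
  then obtain t where t: "w = tpt (take t L)" using chain_vertices_cases[OF assms(2)] by blast
  have "L!q \<in> set (take t L) \<Longrightarrow> L!p \<in> set (take t L)"
    using nth_in_set_take_iff[OF assms(1)] assms(3,4) by auto
  then show ?thesis using t by (auto simp: tpt_component)
qed

lemma tconv_le_shift:
  fixes x :: "real^'e::finite"
  assumes "x \<in> tconv V" and "finite V" and "V \<noteq> {}" and "\<forall>v\<in>V. v$j \<le> v$i + a"
  shows "x$j \<le> x$i + a"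
proof -
  obtain lam where lam: "\<And>k. x$k = (MIN v\<in>V. lam v + v$k)" using assms(1) unfolding tconv_def by blast
  have "x$j - a \<le> lam v + v$i" if "v \<in> V" for v
  proof -
    have "x$j \<le> lam v + v$j" unfolding lam[of j] using assms(2) that by simp
    then show ?thesis using assms(4) that by fastforce
  qed
  then have "x$j - a \<le> x$i" unfolding lam[of i] using assms(2,3) by (subst Min_ge_iff) auto
  then show ?thesis by simp
qed

lemma tconv_chain_vertices_subset:
  fixes L :: "'e::finite list"
  assumes d: "distinct L" and nu: "set L \<noteq> UNIV"
  shows "tconv (chain_vertices L) \<subseteq> chain_cell L"
proof
  fix x assume x: "x \<in> tconv (chain_vertices L)"
  note le = tconv_le_shift[OF x finite_chain_vertices chain_vertices_nonempty]
  obtain j0 where j0: "j0 \<notin> set L" using nu by auto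
  have "x$j = x$j0" if "j \<notin> set L" for j
    using le[of j j0 0] le[of j0 j 0] chain_vertex_outside[OF _ that] chain_vertex_outside[OF _ j0]
    by fastforce
  moreover have "x$j0 \<le> x$(L!p) \<and> x$(L!p) \<le> x$j0 + 1" for p
    using le[of j0 "L!p" 0] le[of "L!p" j0 1] chain_vertex_outside_le[OF _ j0]
      chain_vertex_values[of _ L "L!p"] chain_vertex_values[of _ L j0] by force
  moreover have "x$(L!q) \<le> x$(L!p)" if "p < q" "q < length L" for p q
    using le[of "L!q" "L!p" 0] chain_vertex_mono[OF d _ that] by simp
  ultimately show "x \<in> chain_cell L" unfolding chain_cell_def by blast
qed

lemma tconv_memI:
  fixes x :: "real^'e::finite"
  assumes "finite V" and witness: "\<And>i. \<exists>w\<in>V. \<forall>k. x$k - w$k \<le> x$i - w$i"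
  shows "x \<in> tconv V"
proof -
  define lam where "lam w = (MAX k. x$k - w$k)" for w :: "real^'e"
  have lam_ge: "x$i \<le> lam w + w$i" for i w
  proof -
    have "x$i - w$i \<le> lam w" unfolding lam_def by (rule Max_ge) auto
    then show ?thesis by simp
  qed
  have "x$i = (MIN w\<in>V. lam w + w$i)" for i
  proof -
    obtain w where w: "w \<in> V" "\<forall>k. x$k - w$k \<le> x$i - w$i" using witness by blast
    have "lam w = x$i - w$i" unfolding lam_def by (rule Max_eqI) (use w(2) in auto)
    then have "lam w + w$i = x$i" by simp
    moreover have "x$i \<le> (MIN w\<in>V. lam w + w$i)"
      using \<open>finite V\<close> w(1) lam_ge by (subst Min_ge_iff) auto
    moreover have "(MIN w\<in>V. lam w + w$i) \<le> lam w + w$i" using \<open>finite V\<close> w(1) by simp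
    ultimately show ?thesis by linarith
  qed
  then show ?thesis unfolding tconv_def by blast
qed

lemma chain_cell_subset_tconv:
  fixes L :: "'e::finite list"
  assumes d: "distinct L" and ne: "L \<noteq> []"
  shows "chain_cell L \<subseteq> tconv (chain_vertices L)"
proof
  fix x assume "x \<in> chain_cell L"
  then obtain c where c1: "\<forall>j. j \<notin> set L \<longrightarrow> x$j = c"
    and c2: "\<forall>p<length L. c \<le> x$(L!p) \<and> x$(L!p) \<le> c + 1"
    and c3: "\<forall>p q. p < q \<longrightarrow> q < length L \<longrightarrow> x$(L!q) \<le> x$(L!p)"
    unfolding chain_cell_def by blast
  have xb: "c \<le> x$i \<and> x$i \<le> c + 1" for i using chain_cell_bounds[OF c1 c2] .
  let ?V = "chain_vertices L"
  show "x \<in> tconv ?V"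
  proof (rule tconv_memI[OF finite_chain_vertices])
    fix i
    show "\<exists>w\<in>?V. \<forall>k. x$k - w$k \<le> x$i - w$i"
    proof (cases "i \<in> set L")
      case False
      have "tpt L \<in> ?V" using ne unfolding chain_vertices_def
        by (intro insertI2 CollectI exI[of _ "length L"]) (simp add: Suc_le_eq)
      moreover have "x$k - tpt L $ k \<le> x$i - tpt L $ i" for k
        using xb[of k] c1 False by (cases "k \<in> set L") (auto simp: tpt_component)
      ultimately show ?thesis by blast
    next
      case True
      then obtain p where p: "p < length L" "i = L!p" by (auto simp: in_set_conv_nth)
      have below: "x$k \<le> x$i" if "k \<notin> set (take p L)" for k
      proof (cases "k \<in> set L")
        case True
        then obtain q where q: "q < length L" "k = L!q" by (auto simp: in_set_conv_nth)
        then have "p \<le> q" using nth_in_set_take_iff[OF d q(1), of p] that by simp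
        then show ?thesis using c3 p q by (cases "p = q") auto
      next
        case False then show ?thesis using c1 xb[of i] by simp
      qed
      show ?thesis
      proof (cases "p = 0")
        case True
        have "(0::real^'e) \<in> ?V" unfolding chain_vertices_def by simp
        then show ?thesis using below True by force
      next
        case False
        let ?w = "tpt (take p L)"
        have "?w \<in> ?V" unfolding chain_vertices_def using False p
          by (intro insertI2 CollectI exI[of _ p]) simp
        moreover have "?w $ i = -1"
          using nth_in_set_take_iff[OF d p(1), of p] p by (simp add: tpt_component)
        moreover have "x$k - ?w $ k \<le> x$i + 1" for k
          using below[of k] xb[of k] xb[of i] by (cases "k \<in> set (take p L)") (auto simp: tpt_component)
        ultimately show ?thesis by (metis diff_minus_eq_add)
      qed
    qed
  qed
qed

subsection \<open>Dimension and relative interior of chain cells\<close>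

definition prefix_indicator :: "'e::finite list \<Rightarrow> nat \<Rightarrow> real^'e" where
  "prefix_indicator L j = (\<chi> i. if i \<in> set (take j L) then 1 else 0)"

definition outside_indicator :: "'e::finite list \<Rightarrow> real^'e" where
  "outside_indicator L = (\<chi> i. if i \<in> set L then 0 else 1)"

lemma chain_cell_memD:
  fixes L :: "'e::finite list"
  assumes x: "x \<in> chain_cell L" and j0: "j0 \<notin> set L"
  shows "(\<forall>j. j \<notin> set L \<longrightarrow> x$j = x$j0) \<and>
      (\<forall>p<length L. x$j0 \<le> x$(L!p) \<and> x$(L!p) \<le> x$j0 + 1) \<and>
      (\<forall>p q. p < q \<longrightarrow> q < length L \<longrightarrow> x$(L!q) \<le> x$(L!p))"
proof -
  obtain c where c1: "\<forall>j. j \<notin> set L \<longrightarrow> x$j = c"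
    and c2: "\<forall>p<length L. c \<le> x$(L!p) \<and> x$(L!p) \<le> c + 1"
    and c3: "\<forall>p q. p < q \<longrightarrow> q < length L \<longrightarrow> x$(L!q) \<le> x$(L!p)"
    using x unfolding chain_cell_def by blast
  have "x$j0 = c" using c1 j0 by blast
  then show ?thesis using c1 c2 c3 by simp
qed

lemma prefix_indicator_in_chain_cell:
  fixes L :: "'e::finite list"
  assumes d: "distinct L"
  shows "prefix_indicator L j \<in> chain_cell L"
proof -
  have h1: "\<forall>i. i \<notin> set L \<longrightarrow> prefix_indicator L j $ i = 0"
    unfolding prefix_indicator_def by (auto dest: in_set_takeD)
  have h2: "\<forall>p<length L. 0 \<le> prefix_indicator L j $ (L!p) \<and> prefix_indicator L j $ (L!p) \<le> 0 + 1"
    unfolding prefix_indicator_def by auto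
  have h3: "\<forall>p q. p < q \<longrightarrow> q < length L \<longrightarrow> prefix_indicator L j $ (L!q) \<le> prefix_indicator L j $ (L!p)"
    unfolding prefix_indicator_def using nth_in_set_take_iff[OF d] by auto
  show ?thesis unfolding chain_cell_def by (intro CollectI exI[of _ 0] conjI h1 h2 h3)
qed

lemma const_in_chain_cell:
  fixes L :: "'e::finite list"
  shows "(\<chi> i. a) \<in> chain_cell L"
  unfolding chain_cell_def by (intro CollectI exI[of _ a]) auto

lemma zero_in_chain_cell: "(0::real^'e::finite) \<in> chain_cell L"
  using const_in_chain_cell[of 0 L] by (simp add: zero_vec_def)

lemma axis_in_span_chain_cell:
  fixes L :: "'e::finite list"
  assumes d: "distinct L" and p: "p < length L"
  shows "axis (L!p) 1 \<in> span (chain_cell L)"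
proof -
  have "axis (L!p) 1 = prefix_indicator L (Suc p) - prefix_indicator L p"
    unfolding vec_eq_iff
  proof
    fix i
    show "axis (L!p) 1 $ i = (prefix_indicator L (Suc p) - prefix_indicator L p) $ i"
    proof (cases "i \<in> set L")
      case True
      then obtain q where q: "q < length L" "i = L!q" by (auto simp: in_set_conv_nth)
      have "(i = L!p) = (q = p)" using q p d by (simp add: nth_eq_iff_index_eq)
      then show ?thesis unfolding prefix_indicator_def axis_def using nth_in_set_take_iff[OF d q(1)] q by auto
    next
      case False
      then have "i \<noteq> L!p" using p by auto
      then show ?thesis unfolding prefix_indicator_def axis_def using False by (auto dest: in_set_takeD)
    qed
  qed
  then show ?thesis using prefix_indicator_in_chain_cell[OF d] by (simp add: span_diff span_base)
qed

lemma outside_indicator_in_span: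
  fixes L :: "'e::finite list"
  assumes d: "distinct L"
  shows "outside_indicator L \<in> span (chain_cell L)"
proof -
  have "outside_indicator L = (\<chi> i. 1) - prefix_indicator L (length L)"
    unfolding vec_eq_iff outside_indicator_def prefix_indicator_def by simp
  then show ?thesis using prefix_indicator_in_chain_cell[OF d] const_in_chain_cell[of 1 L] by (simp add: span_diff span_base)
qed

lemma affine_hull_chain_cell: "affine hull (chain_cell L) = span (chain_cell L)"
  by (rule affine_hull_span_0) (simp add: hull_inc zero_in_chain_cell)

text \<open>Near a relative interior point, moving a single coordinate of \<open>L\<close> up or down stays
  in the cell, so all defining inequalities are strict there.\<close>

lemma rel_interior_chain_cell_strict:
  fixes L :: "'e::finite list"
  assumes d: "distinct L" and nu: "set L \<noteq> UNIV" and x: "x \<in> rel_interior (chain_cell L)"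
  shows "\<exists>c. strict_chain L x c"
proof -
  obtain j0 where j0: "j0 \<notin> set L" using nu by auto
  have xD: "x \<in> chain_cell L" and "\<exists>e>0. ball x e \<inter> affine hull (chain_cell L) \<subseteq> chain_cell L"
    using x unfolding mem_rel_interior_ball by blast+
  then obtain e where e: "e > 0" "ball x e \<inter> span (chain_cell L) \<subseteq> chain_cell L" unfolding affine_hull_chain_cell by blast
  have xs: "x \<in> span (chain_cell L)" using xD by (simp add: span_base)
  have pert: "x + t *\<^sub>R axis (L!p) 1 \<in> chain_cell L" if "\<bar>t\<bar> < e" "p < length L" for t p
  proof -
    have "x + t *\<^sub>R axis (L!p) 1 \<in> span (chain_cell L)"
      using xs axis_in_span_chain_cell[OF d that(2)] by (simp add: span_add span_mul)
    moreover have "x + t *\<^sub>R axis (L!p) 1 \<in> ball x e"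
      using that(1) by (simp add: dist_norm)
    ultimately show ?thesis using e(2) by blast
  qed
  have comp: "(x + t *\<^sub>R axis a 1) $ i = x$i + (if i = a then t else 0)" for t a i
    unfolding axis_def by simp
  note xc = chain_cell_memD[OF xD j0]
  let ?c = "x$j0"
  have s1: "?c < x$(L!p) \<and> x$(L!p) < ?c + 1" if p: "p < length L" for p
  proof
    have "\<bar>- e/2\<bar> < e" using e by simp
    note zc = chain_cell_memD[OF pert[OF this p] j0]
    have "(x + (- e/2) *\<^sub>R axis (L!p) 1) $ j0 \<le> (x + (- e/2) *\<^sub>R axis (L!p) 1) $ (L!p)" using zc p by blast
    moreover have "L!p \<noteq> j0" using p j0 by auto
    ultimately show "?c < x$(L!p)" unfolding comp using e by simp
  next
    have "\<bar>e/2\<bar> < e" using e by simp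
    note zc = chain_cell_memD[OF pert[OF this p] j0]
    have "(x + (e/2) *\<^sub>R axis (L!p) 1) $ (L!p) \<le> (x + (e/2) *\<^sub>R axis (L!p) 1) $ j0 + 1" using zc p by blast
    moreover have "L!p \<noteq> j0" using p j0 by auto
    ultimately show "x$(L!p) < ?c + 1" unfolding comp using e by simp
  qed
  have s2: "x$(L!q) < x$(L!p)" if pq: "p < q" "q < length L" for p q
  proof -
    have "\<bar>e/2\<bar> < e" using e by simp
    note zc = chain_cell_memD[OF pert[OF this pq(2)] j0]
    have "(x + (e/2) *\<^sub>R axis (L!q) 1) $ (L!q) \<le> (x + (e/2) *\<^sub>R axis (L!q) 1) $ (L!p)" using zc pq by blast
    moreover have "L!p \<noteq> L!q" using pq d by (simp add: nth_eq_iff_index_eq)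
    ultimately show ?thesis unfolding comp using e by simp
  qed
  have "strict_chain L x ?c" unfolding strict_chain_def using xc s1 s2 by blast
  then show ?thesis by blast
qed

definition chain_basis :: "'e::finite list \<Rightarrow> (real^'e) set" where
  "chain_basis L = insert (outside_indicator L) ((\<lambda>a. axis a 1) ` set L)"

lemma span_chain_cell:
  fixes L :: "'e::finite list"
  assumes d: "distinct L" and nu: "set L \<noteq> UNIV"
  shows "span (chain_cell L) = span (chain_basis L)"
proof -
  obtain j0 where j0: "j0 \<notin> set L" using nu by auto
  have WD: "chain_basis L \<subseteq> span (chain_cell L)"
  proof
    fix w assume "w \<in> chain_basis L"
    then have "w \<in> insert (outside_indicator L) ((\<lambda>a. axis a 1) ` set L)"
      unfolding chain_basis_def .
    then show "w \<in> span (chain_cell L)"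
    proof
      assume "w = outside_indicator L" then show ?thesis using outside_indicator_in_span[OF d] by simp
    next
      assume "w \<in> (\<lambda>a. axis a 1) ` set L"
      then obtain p where "p < length L" "w = axis (L!p) 1" by (auto simp: in_set_conv_nth)
      then show ?thesis using axis_in_span_chain_cell[OF d] by simp
    qed
  qed
  have DW: "chain_cell L \<subseteq> span (chain_basis L)"
  proof
    fix x assume x: "x \<in> chain_cell L"
    note xc = chain_cell_memD[OF x j0]
    have eq: "x = x$j0 *\<^sub>R outside_indicator L + (\<Sum>a\<in>set L. x$a *\<^sub>R axis a 1)"
      unfolding vec_eq_iff
    proof
      fix i
      have s: "(\<Sum>a\<in>set L. x$a *\<^sub>R axis a (1::real)) $ i = (if i \<in> set L then x$i else 0)"
      proof -
        have "(\<Sum>a\<in>set L. x$a *\<^sub>R axis a (1::real)) $ i = (\<Sum>a\<in>set L. x$a * (if i = a then 1 else 0))"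
          by (simp add: axis_def)
        also have "\<dots> = (\<Sum>a\<in>set L. if a = i then x$i else 0)" by (rule sum.cong) auto
        also have "\<dots> = (if i \<in> set L then x$i else 0)" by (simp add: sum.delta)
        finally show ?thesis .
      qed
      show "x$i = (x$j0 *\<^sub>R outside_indicator L + (\<Sum>a\<in>set L. x$a *\<^sub>R axis a 1)) $ i"
        using xc unfolding vector_add_component s by (auto simp: outside_indicator_def)
    qed
    have "x$j0 *\<^sub>R outside_indicator L \<in> span (chain_basis L)"
      by (intro span_mul span_base) (simp add: chain_basis_def)
    moreover have "(\<Sum>a\<in>set L. x$a *\<^sub>R axis a 1) \<in> span (chain_basis L)"
      by (intro span_sum span_mul span_base) (simp add: chain_basis_def)
    ultimately show "x \<in> span (chain_basis L)" using eq by (metis span_add)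
  qed
  show ?thesis
  proof
    show "span (chain_cell L) \<subseteq> span (chain_basis L)" using DW by (simp add: span_minimal)
    show "span (chain_basis L) \<subseteq> span (chain_cell L)" using WD by (simp add: span_minimal)
  qed
qed

lemma independent_chain_basis:
  fixes L :: "'e::finite list"
  assumes nu: "set L \<noteq> UNIV"
  shows "independent (chain_basis L)"
proof -
  obtain j0 where j0: "j0 \<notin> set L" using nu by auto
  let ?W = "insert (outside_indicator L) ((\<lambda>a. axis a (1::real)) ` set L)"
  have orth: "pairwise orthogonal ?W"
    unfolding pairwise_def orthogonal_def
  proof (intro ballI impI)
    fix v w assume v: "v \<in> ?W" and w: "w \<in> ?W" and vw: "v \<noteq> w"
    have ia: "outside_indicator L \<bullet> axis a 1 = 0" if "a \<in> set L" for a
      using that by (simp add: inner_axis outside_indicator_def)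
    show "v \<bullet> w = 0"
    proof (cases "v = outside_indicator L")
      case True
      then have "w \<in> (\<lambda>a. axis a 1) ` set L" using w vw by blast
      then show ?thesis using True ia by auto
    next
      case False
      then obtain a where a: "a \<in> set L" "v = axis a 1" using v by blast
      show ?thesis
      proof (cases "w = outside_indicator L")
        case True then show ?thesis using a ia by (simp add: inner_commute)
      next
        case False
        then obtain b where b: "b \<in> set L" "w = axis b 1" using w by blast
        then have "a \<noteq> b" using a vw by blast
        then show ?thesis using a b by (simp add: inner_axis_axis)
      qed
    qed
  qed
  have n0: "0 \<notin> ?W"
  proof
    assume "0 \<in> ?W"
    then show False
    proof
      assume "0 = outside_indicator L"
      then have "(0::real^'e) $ j0 = outside_indicator L $ j0" by simp
      then show False using j0 by (simp add: outside_indicator_def)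
    next
      assume "0 \<in> (\<lambda>a. axis a (1::real)) ` set L"
      then obtain a where "(0::real^'e) = axis a 1" by blast
      then have "(0::real^'e) $ a = axis a 1 $ a" by simp
      then show False by simp
    qed
  qed
  show ?thesis unfolding chain_basis_def by (rule pairwise_orthogonal_independent[OF orth n0])
qed

lemma card_chain_basis:
  fixes L :: "'e::finite list"
  assumes d: "distinct L"
  shows "card (chain_basis L) = length L + 1"
proof -
  have nin: "outside_indicator L \<notin> (\<lambda>a. axis a (1::real)) ` set L"
  proof
    assume "outside_indicator L \<in> (\<lambda>a. axis a (1::real)) ` set L"
    then obtain a where a: "a \<in> set L" "outside_indicator L = axis a 1" by blast
    then have "outside_indicator L $ a = axis a (1::real) $ a" by simp
    then show False using a by (simp add: outside_indicator_def)
  qed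
  have inj: "inj_on (\<lambda>a. axis a (1::real)) (set L)"
    by (rule inj_onI) (simp add: axis_eq_axis)
  show ?thesis unfolding chain_basis_def using nin inj d by (simp add: card_image distinct_card)
qed

lemma aff_dim_chain_cell:
  fixes L :: "'e::finite list"
  assumes "distinct L" and "set L \<noteq> UNIV"
  shows "aff_dim (chain_cell L) = int (length L + 1)"
proof -
  have "aff_dim (chain_cell L) = int (dim (chain_cell L))"
    by (rule aff_dim_zero) (simp add: hull_inc zero_in_chain_cell)
  also have "dim (chain_cell L) = dim (span (chain_basis L))"
    using span_chain_cell[OF assms] by (metis dim_span)
  also have "\<dots> = card (chain_basis L)"
    by (rule dim_span_eq_card_independent[OF independent_chain_basis[OF assms(2)]])
  finally show ?thesis using card_chain_basis[OF assms(1)] by simp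
qed

lemma strict_chain_attains_max_nth:
  fixes L :: "'e::finite list"
  assumes s: "strict_chain L x c" and B: "B \<noteq> {}" and d: "distinct L" and p: "p < length L"
  shows "attains_max x B (L!p) \<longleftrightarrow> L!p \<in> B \<and> (\<forall>a\<in>set (take p L). a \<notin> B)"
proof -
  have ch: "attains_max x B (L!p) \<longleftrightarrow> L!p \<in> B \<and> (\<forall>i\<in>B. x$i \<le> x$(L!p))"
    using attains_max_iff[OF _ B] strict_chain_bounds[OF s] by blast
  have "(\<forall>i\<in>B. x$i \<le> x$(L!p)) \<longleftrightarrow> (\<forall>a\<in>set (take p L). a \<notin> B)"
  proof
    assume h: "\<forall>i\<in>B. x$i \<le> x$(L!p)"
    show "\<forall>a\<in>set (take p L). a \<notin> B"
    proof (intro ballI notI)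
      fix a assume a: "a \<in> set (take p L)" "a \<in> B"
      then have "a \<in> set L" by (meson in_set_takeD)
      then obtain q where q: "q < length L" "a = L!q" by (auto simp: in_set_conv_nth)
      then have "q < p" using nth_in_set_take_iff[OF d q(1)] a by simp
      then have "x$(L!p) < x$(L!q)" using s p unfolding strict_chain_def by blast
      then show False using h a q by force
    qed
  next
    assume h: "\<forall>a\<in>set (take p L). a \<notin> B"
    show "\<forall>i\<in>B. x$i \<le> x$(L!p)"
    proof
      fix i assume i: "i \<in> B"
      show "x$i \<le> x$(L!p)"
      proof (cases "i \<in> set L")
        case True
        then obtain q where q: "q < length L" "i = L!q" by (auto simp: in_set_conv_nth)
        have "\<not> q < p" using nth_in_set_take_iff[OF d q(1), of p] h i q by blast
        then have "p = q \<or> p < q" by linarith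
        then show ?thesis
        proof
          assume "p = q" then show ?thesis using q by simp
        next
          assume "p < q" then have "x$(L!q) < x$(L!p)" using s q unfolding strict_chain_def by blast
          then show ?thesis using q by simp
        qed
      next
        case False
        then have "x$i = c" using s unfolding strict_chain_def by blast
        then show ?thesis using s p unfolding strict_chain_def by force
      qed
    qed
  qed
  then show ?thesis using ch by blast
qed

lemma strict_chain_attains_max_outside:
  fixes L :: "'e::finite list"
  assumes s: "strict_chain L x c" and B: "B \<noteq> {}" and j: "j \<notin> set L"
  shows "attains_max x B j \<longleftrightarrow> j \<in> B \<and> (\<forall>a\<in>set L. a \<notin> B)"
proof -
  have ch: "attains_max x B j \<longleftrightarrow> j \<in> B \<and> (\<forall>i\<in>B. x$i \<le> x$j)"
    using attains_max_iff[OF _ B] strict_chain_bounds[OF s] by blast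
  have xj: "x$j = c" using s j unfolding strict_chain_def by blast
  have "(\<forall>i\<in>B. x$i \<le> x$j) \<longleftrightarrow> (\<forall>a\<in>set L. a \<notin> B)"
  proof
    assume h: "\<forall>i\<in>B. x$i \<le> x$j"
    show "\<forall>a\<in>set L. a \<notin> B"
    proof (intro ballI notI)
      fix a assume a: "a \<in> set L" "a \<in> B"
      then obtain q where q: "q < length L" "a = L!q" by (auto simp: in_set_conv_nth)
      then have "c < x$a" using s unfolding strict_chain_def by blast
      then show False using h a xj by force
    qed
  next
    assume h: "\<forall>a\<in>set L. a \<notin> B"
    show "\<forall>i\<in>B. x$i \<le> x$j"
    proof
      fix i assume "i \<in> B" then have "i \<notin> set L" using h by blast
      then show "x$i \<le> x$j" using s xj unfolding strict_chain_def by simp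
    qed
  qed
  then show ?thesis using ch by blast
qed

lemma attains_max_zero:
  assumes "B \<noteq> {}"
  shows "attains_max (0::real^'e::finite) B m \<longleftrightarrow> m \<in> B"
  using attains_max_iff[of 0 "0::real^'e", OF _ assms] by simp

subsection \<open>The maximal bounded cells of a family with pair exchange\<close>

lemma sorted_map_inj_unique:
  assumes "inj_on f (set xs)" and "set xs = set ys" and "distinct xs" and "distinct ys"
    and "sorted (map f xs)" and "sorted (map f ys)"
  shows "xs = ys"
proof -
  have "map f xs = map f ys"
    using assms by (intro sorted_distinct_set_unique) (auto simp: distinct_map)
  then show ?thesis using assms(1,2) inj_on_map_eq_map[of f xs ys] by simp
qed

lemma sorted_chain_cell:
  assumes "x \<in> chain_cell L"
  shows "sorted (map (\<lambda>i. - x$i) L)"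
  unfolding sorted_iff_nth_mono
proof (intro allI impI)
  fix p q assume "p \<le> q" "q < length (map (\<lambda>i. - x$i) L)"
  then show "map (\<lambda>i. - x$i) L ! p \<le> map (\<lambda>i. - x$i) L ! q"
    using assms unfolding chain_cell_def by (cases "p = q") auto
qed

lemma inj_on_chain_center:
  assumes "distinct L"
  shows "inj_on (\<lambda>i. - chain_center L $ i) (set L)"
proof
  fix a b assume "a \<in> set L" "b \<in> set L" and e: "- chain_center L $ a = - chain_center L $ b"
  then obtain p q where p: "p < length L" "a = L!p" and q: "q < length L" "b = L!q"
    by (auto simp: in_set_conv_nth)
  then have "p = q" using chain_center_le_iff[OF assms p(1) q(1)] chain_center_le_iff[OF assms q(1) p(1)] e
    by simp
  then show "a = b" using p q by simp
qed

locale exchange_family =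
  fixes BB :: "'e::finite set set"
  assumes family_nonempty: "BB \<noteq> {}" and member_nonempty: "B \<in> BB \<Longrightarrow> B \<noteq> {}" and member_not_UNIV: "B \<in> BB \<Longrightarrow> B \<noteq> UNIV"
    and member_card: "B \<in> BB \<Longrightarrow> B' \<in> BB \<Longrightarrow> card B = card B'"
    and exchange: "B0 \<in> BB \<Longrightarrow> a \<noteq> b \<Longrightarrow> \<exists>B\<in>BB. a \<in> B \<and> b \<in> B \<and> B \<subseteq> B0 \<union> {a, b}"
begin

definition valid_seq :: "'e list \<Rightarrow> bool" where
  "valid_seq L \<longleftrightarrow> distinct L \<and> UNIV - set L \<in> BB"

lemma attains_max_chain_center:
  assumes d: "distinct L" and B: "B \<noteq> {}"
  shows "attains_max (chain_center L) B m \<longleftrightarrow> m \<in> B \<and> (\<forall>i\<in>B. chain_center L $ i \<le> chain_center L $ m)"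
  using attains_max_iff[OF _ B] strict_chain_bounds[OF strict_chain_center[OF d]] by blast

lemma chain_cell_subset_cell_closure:
  assumes v: "valid_seq L"
  shows "chain_cell L \<subseteq> cell_closure BB (chain_center L)"
proof
  fix y assume "y \<in> chain_cell L"
  then obtain c where c1: "\<forall>j. j \<notin> set L \<longrightarrow> y$j = c"
    and c2: "\<forall>p<length L. c \<le> y$(L!p) \<and> y$(L!p) \<le> c + 1"
    and c3: "\<forall>p q. p < q \<longrightarrow> q < length L \<longrightarrow> y$(L!q) \<le> y$(L!p)"
    unfolding chain_cell_def by blast
  have yb: "c \<le> y$i \<and> y$i \<le> c + 1" for i using chain_cell_bounds[OF c1 c2] .
  have d: "distinct L" using v unfolding valid_seq_def by blast
  show "y \<in> cell_closure BB (chain_center L)" unfolding cell_closure_def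
  proof (intro CollectI ballI allI impI)
    fix B m assume BB: "B \<in> BB" and a: "attains_max (chain_center L) B m"
    have Bn: "B \<noteq> {}" using member_nonempty[OF BB] .
    from a have mB: "m \<in> B" and mx: "\<forall>i\<in>B. chain_center L $ i \<le> chain_center L $ m"
      using attains_max_chain_center[OF d Bn] by blast+
    have le: "y$i \<le> y$m" if iB: "i \<in> B" for i
    proof (cases "m \<in> set L")
      case False
      then have "chain_center L $ m = 0" by (rule chain_center_outside)
      then have "chain_center L $ i \<le> 0" using mx iB by simp
      then have "i \<notin> set L" using chain_center_bounds(1)[OF d] by (metis in_set_conv_nth not_le)
      then show ?thesis using c1 False by simp
    next
      case True
      then obtain p where p: "p < length L" "m = L!p" by (auto simp: in_set_conv_nth)
      show ?thesis
      proof (cases "i \<in> set L")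
        case False then show ?thesis using c1 yb[of m] by simp
      next
        case True
        then obtain q where q: "q < length L" "i = L!q" by (auto simp: in_set_conv_nth)
        have "chain_center L $ (L!q) \<le> chain_center L $ (L!p)" using mx iB p q by simp
        then have "p \<le> q" using chain_center_le_iff[OF d p(1) q(1)] by simp
        then show ?thesis using c3 p q by (cases "p = q") auto
      qed
    qed
    show "attains_max y B m" unfolding attains_max_def
    proof
      fix i
      show "y$i + indicator B i \<le> y$m + indicator B m"
      proof (cases "i \<in> B")
        case True then show ?thesis using le mB by (simp add: indicator_def)
      next
        case False then show ?thesis using yb[of i] yb[of m] mB by (simp add: indicator_def)
      qed
    qed
  qed
qed

text \<open>Every point of the closed cell of the centre inherits the inequalities of the chain cell
  from single bases: \<open>UNIV - set L\<close> itself, and the exchange bases through two coordinates.\<close>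

lemma cell_closure_exchange_le:
  assumes v: "valid_seq L" and y: "y \<in> cell_closure BB (chain_center L)"
    and "a \<in> set L" and "a \<noteq> b" and le: "chain_center L $ b \<le> chain_center L $ a"
  shows "y$b \<le> y$a"
proof -
  have d: "distinct L" and B0: "UNIV - set L \<in> BB" using v unfolding valid_seq_def by blast+
  obtain B where B: "B \<in> BB" "a \<in> B" "b \<in> B" "B \<subseteq> (UNIV - set L) \<union> {a, b}"
    using exchange[OF B0 \<open>a \<noteq> b\<close>] by blast
  have "0 < chain_center L $ a"
    using \<open>a \<in> set L\<close> chain_center_bounds(1)[OF d] by (metis in_set_conv_nth)
  then have "\<forall>i\<in>B. chain_center L $ i \<le> chain_center L $ a"
    using B(4) le chain_center_outside by fastforce
  then have "attains_max (chain_center L) B a"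
    using attains_max_chain_center[OF d member_nonempty[OF B(1)]] B(2) by blast
  then have "attains_max y B a" using y B(1) unfolding cell_closure_def by blast
  then show ?thesis using B(2,3) unfolding attains_max_def by (metis add_le_cancel_right indicator_simps(1))
qed

lemma cell_closure_subset_chain_cell:
  assumes v: "valid_seq L"
  shows "cell_closure BB (chain_center L) \<subseteq> chain_cell L"
proof
  fix y assume y: "y \<in> cell_closure BB (chain_center L)"
  have d: "distinct L" and B0: "UNIV - set L \<in> BB" using v unfolding valid_seq_def by blast+
  let ?B0 = "UNIV - set L"
  obtain j0 where j0: "j0 \<in> ?B0" using member_nonempty[OF B0] by blast
  have "attains_max (chain_center L) ?B0 j" if "j \<in> ?B0" for j
    using attains_max_chain_center[OF d member_nonempty[OF B0]] that by (simp add: chain_center_outside)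
  then have amB0: "\<forall>i. y$i + indicator ?B0 i \<le> y$j + indicator ?B0 j" if "j \<in> ?B0" for j
    using y B0 that unfolding cell_closure_def attains_max_def by blast
  let ?c = "y$j0"
  have const: "y$j = ?c" if "j \<notin> set L" for j
    using amB0[of j] amB0[OF j0] that j0 by (metis DiffI UNIV_I add_right_cancel indicator_simps(1) order_antisym)
  have upper: "y$(L!p) \<le> ?c + 1" if "p < length L" for p
    using amB0[OF j0, rule_format, of "L!p"] that j0 by simp
  have lower: "?c \<le> y$(L!p)" if p: "p < length L" for p
  proof -
    have "L!p \<noteq> j0" using p j0 by auto
    moreover have "chain_center L $ j0 \<le> chain_center L $ (L!p)"
      using j0 chain_center_outside[of j0 L] chain_center_bounds(1)[OF d p] by simp
    ultimately show ?thesis using cell_closure_exchange_le[OF v y, of "L!p" j0] p by simp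
  qed
  have order: "y$(L!q) \<le> y$(L!p)" if pq: "p < q" "q < length L" for p q
    using cell_closure_exchange_le[OF v y, of "L!p" "L!q"] pq d
    by (simp add: chain_center_le_iff nth_eq_iff_index_eq)
  show "y \<in> chain_cell L" unfolding chain_cell_def
    using const upper lower order by blast
qed

lemma chain_cell_eq_cell_closure: "valid_seq L \<Longrightarrow> chain_cell L = cell_closure BB (chain_center L)"
  using chain_cell_subset_cell_closure cell_closure_subset_chain_cell by blast

lemma exists_other_coordinate: "\<exists>i::'e. i \<noteq> m"
proof -
  obtain B where B: "B \<in> BB" using family_nonempty by blast
  obtain a where "a \<in> B" using member_nonempty[OF B] by blast
  moreover obtain b where "b \<notin> B" using member_not_UNIV[OF B] by blast
  ultimately show ?thesis by metis
qed

text \<open>If no basis attains its maximum at \<open>m\<close>, lowering coordinate \<open>m\<close> arbitrarily keeps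
  the point in the cell.\<close>

lemma tbounded_imp_attains_max:
  assumes bd: "tbounded (cell_closure BB x0)"
  shows "\<exists>B\<in>BB. attains_max x0 B m"
proof (rule ccontr)
  assume nm: "\<not> (\<exists>B\<in>BB. attains_max x0 B m)"
  obtain i where im: "i \<noteq> m" using exists_other_coordinate by blast
  obtain C where C: "\<forall>x\<in>cell_closure BB x0. \<forall>i j. \<bar>x$i - x$j\<bar> \<le> C" using bd unfolding tbounded_def by blast
  define t where "t = C + \<bar>x0$m - x0$i\<bar> + 1"
  define y where "y = (\<chi> k. if k = m then x0$m - t else x0$k)"
  have t0: "t \<ge> 0"
  proof -
    have "x0 \<in> cell_closure BB x0" unfolding cell_closure_def by blast
    then have "\<bar>x0$m - x0$i\<bar> \<le> C" using C by blast
    then show ?thesis unfolding t_def by linarith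
  qed
  have yle: "y$k \<le> x0$k" for k unfolding y_def using t0 by auto
  have "y \<in> cell_closure BB x0" unfolding cell_closure_def
  proof (intro CollectI ballI allI impI)
    fix B m' assume B: "B \<in> BB" and a: "attains_max x0 B m'"
    then have "m' \<noteq> m" using nm by blast
    then have ym': "y$m' = x0$m'" unfolding y_def by simp
    show "attains_max y B m'" unfolding attains_max_def
    proof
      fix k
      have "x0$k + indicator B k \<le> x0$m' + indicator B m'" using a unfolding attains_max_def by blast
      then show "y$k + indicator B k \<le> y$m' + indicator B m'" using yle[of k] ym' by linarith
    qed
  qed
  then have "\<bar>y$m - y$i\<bar> \<le> C" using C by blast
  moreover have "y$m = x0$m - t" "y$i = x0$i" unfolding y_def using im by auto
  ultimately show False unfolding t_def by linarith
qed

lemma exists_valid_seq_chain_cell: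
  assumes ex: "\<And>m. \<exists>B\<in>BB. attains_max x0 B m"
  shows "\<exists>L. valid_seq L \<and> x0 \<in> chain_cell L"
proof -
  let ?f = "\<lambda>i. x0$i"
  define c where "c = Min (range ?f)"
  have cle: "c \<le> x0$i" for i unfolding c_def by (rule Min_le) auto
  have "c \<in> range ?f" unfolding c_def by (rule Min_in) auto
  then obtain m where m: "c = x0$m" by (rule imageE)
  obtain B where B: "B \<in> BB" "attains_max x0 B m" using ex by blast
  have amB: "x0$i + indicator B i \<le> x0$m + indicator B m" for i using B(2) unfolding attains_max_def by blast
  have onB: "x0$i = c" if "i \<in> B" for i
  proof -
    have "x0$i + 1 \<le> x0$m + indicator B m" using amB[of i] that by simp
    then show ?thesis using cle[of i] m indicator_le_1[where 'a=real, of B m] by linarith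
  qed
  have up: "x0$i \<le> c + 1" for i
    using amB[of i] m indicator_le_1[where 'a=real, of B m] indicator_pos_le[where 'a=real, of B i] by linarith
  obtain xs where xs: "set xs = UNIV - B" "distinct xs" using finite_distinct_list[of "UNIV - B"] by auto
  define L where "L = sort_key (\<lambda>i. - x0$i) xs"
  have d: "distinct L" "set L = UNIV - B" unfolding L_def using xs by auto
  have srt: "sorted (map (\<lambda>i. - x0$i) L)" unfolding L_def by simp
  have v: "valid_seq L" unfolding valid_seq_def using d B by (simp add: Diff_Diff_Int)
  have h1: "\<forall>j. j \<notin> set L \<longrightarrow> x0$j = c" using d onB by auto
  have h2: "\<forall>p<length L. c \<le> x0$(L!p) \<and> x0$(L!p) \<le> c + 1" using cle up by auto
  have h3: "\<forall>p q. p < q \<longrightarrow> q < length L \<longrightarrow> x0$(L!q) \<le> x0$(L!p)"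
  proof (intro allI impI)
    fix p q assume pq: "p < q" "q < length L"
    have "(map (\<lambda>i. - x0$i) L)!p \<le> (map (\<lambda>i. - x0$i) L)!q"
      using sorted_nth_mono[OF srt, of p q] pq by simp
    then show "x0$(L!q) \<le> x0$(L!p)" using pq by simp
  qed
  have "x0 \<in> chain_cell L" unfolding chain_cell_def by (intro CollectI exI[of _ c] conjI h1 h2 h3)
  then show ?thesis using v by blast
qed

lemma tbounded_chain_cell: "tbounded (chain_cell L)"
  unfolding tbounded_def
proof (intro exI ballI allI)
  fix x i j assume "x \<in> chain_cell L"
  then obtain c where c1: "\<forall>j. j \<notin> set L \<longrightarrow> x$j = c"
    and c2: "\<forall>p<length L. c \<le> x$(L!p) \<and> x$(L!p) \<le> c + 1"
    unfolding chain_cell_def by blast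
  show "\<bar>x$i - x$j\<bar> \<le> 1" using chain_cell_bounds[OF c1 c2, of i] chain_cell_bounds[OF c1 c2, of j] by linarith
qed

lemma chain_cell_subset_imp_eq:
  assumes v: "valid_seq L" and v': "valid_seq L'" and sub: "chain_cell L \<subseteq> chain_cell L'"
  shows "L = L'"
proof -
  have d: "distinct L" and B0: "UNIV - set L \<in> BB" using v unfolding valid_seq_def by blast+
  have d': "distinct L'" and B0': "UNIV - set L' \<in> BB" using v' unfolding valid_seq_def by blast+
  let ?x = "chain_center L"
  have "?x \<in> chain_cell L" using chain_cell_eq_cell_closure[OF v] unfolding cell_closure_def by blast
  then have x': "?x \<in> chain_cell L'" using sub by blast
  then obtain c where c1: "\<forall>j. j \<notin> set L' \<longrightarrow> ?x$j = c"
    and c2: "\<forall>p<length L'. c \<le> ?x$(L'!p) \<and> ?x$(L'!p) \<le> c + 1"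
    unfolding chain_cell_def by blast
  have pos: "0 < ?x$i" if "i \<in> set L" for i
    using that chain_center_bounds(1)[OF d] by (metis in_set_conv_nth)
  have nonneg: "0 \<le> ?x$i" for i using pos[of i] chain_center_outside[of i L] by fastforce
  obtain j0 where j0: "j0 \<notin> set L" using member_nonempty[OF B0] by blast
  obtain j1 where j1: "j1 \<notin> set L'" using member_nonempty[OF B0'] by blast
  have "c \<le> 0" using chain_cell_bounds[OF c1 c2, of j0] chain_center_outside[OF j0] by simp
  then have c0: "c = 0" using c1 j1 nonneg[of j1] by simp
  have "UNIV - set L' \<subseteq> UNIV - set L" using c1 c0 pos by fastforce
  moreover have "card (UNIV - set L') = card (UNIV - set L)" using member_card[OF B0' B0] .
  ultimately have "UNIV - set L' = UNIV - set L" using card_subset_eq[OF finite] by blast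
  then have "set L = set L'" by blast
  with d d' show ?thesis
    using sorted_map_inj_unique inj_on_chain_center[OF d] sorted_chain_cell[OF x']
      sorted_chain_cell[OF \<open>?x \<in> chain_cell L\<close>] by blast
qed

lemma valid_seqD:
  assumes "valid_seq L"
  shows "distinct L" and "set L \<noteq> UNIV" and "L \<noteq> []"
proof -
  have B: "UNIV - set L \<in> BB" using assms unfolding valid_seq_def by blast
  show "distinct L" using assms unfolding valid_seq_def by blast
  show "set L \<noteq> UNIV" using member_nonempty[OF B] by blast
  show "L \<noteq> []" using member_not_UNIV[OF B] by auto
qed

lemma length_valid_seq:
  assumes "valid_seq L"
  shows "length L = CARD('e) - card (UNIV - set L)"
proof -
  have "card (UNIV - set L) = CARD('e) - length L"
    using distinct_card[OF valid_seqD(1)[OF assms]] by (simp add: card_Diff_subset)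
  moreover have "length L \<le> CARD('e)"
    using distinct_card[OF valid_seqD(1)[OF assms]] card_mono[OF finite subset_UNIV, of "set L"]
    by simp
  ultimately show ?thesis by simp
qed

lemma tconv_chain_vertices_eq: "valid_seq L \<Longrightarrow> tconv (chain_vertices L) = chain_cell L"
  using tconv_chain_vertices_subset chain_cell_subset_tconv valid_seqD by blast

lemma tdim_chain_cell: "valid_seq L \<Longrightarrow> tdim (chain_cell L) = int (length L)"
  using aff_dim_chain_cell[OF valid_seqD(1,2)] by (simp add: tdim_def)

end

lemma (in bridgeless_graph) exchange_family_spanning_trees:
  assumes "\<And>B. spanning_tree Vs ends B \<Longrightarrow> card B = k"
  shows "exchange_family {B. spanning_tree Vs ends B}"
proof unfold_locales
  show "{B. spanning_tree Vs ends B} \<noteq> {}" using spanning_tree_exists by simp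
next
  fix B B' assume "B \<in> {B. spanning_tree Vs ends B}" "B' \<in> {B. spanning_tree Vs ends B}"
  then show "card B = card B'" using assms by simp
next
  fix B0 and a b :: 'e
  assume "B0 \<in> {B. spanning_tree Vs ends B}" and "a \<noteq> b"
  then show "\<exists>B\<in>{B. spanning_tree Vs ends B}. a \<in> B \<and> b \<in> B \<and> B \<subseteq> B0 \<union> {a, b}"
    using spanning_tree_through_two_edges by simp
qed (simp_all add: spanning_tree_nonempty spanning_tree_not_UNIV)

locale indexed_exchange_family = exchange_family BB for BB :: "'e::finite set set" +
  fixes n :: nat and Bs :: "nat \<Rightarrow> 'e set"
  assumes Bs_image: "Bs ` {1..n} = BB"
begin

abbreviation gens :: "nat \<Rightarrow> real^'e" where
  "gens \<equiv> \<lambda>l. neg_ind (Bs l)"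

lemma ttype_eq_iff:
  "ttype n gens x = ttype n gens x0 \<longleftrightarrow> (\<forall>B\<in>BB. \<forall>m. attains_max x B m = attains_max x0 B m)"
proof
  assume "ttype n gens x = ttype n gens x0"
  then have "{l\<in>{1..n}. attains_max x (Bs l) m} = {l\<in>{1..n}. attains_max x0 (Bs l) m}" for m
    by (metis ttype_neg_ind)
  then show "\<forall>B\<in>BB. \<forall>m. attains_max x B m = attains_max x0 B m"
    using Bs_image by blast
next
  assume "\<forall>B\<in>BB. \<forall>m. attains_max x B m = attains_max x0 B m"
  then show "ttype n gens x = ttype n gens x0"
    using Bs_image by (intro ext) (auto simp: ttype_neg_ind)
qed

lemma bounded_cells_eq: "bounded_cells n gens = {C \<in> range (cell_closure BB). tbounded C}"
proof -
  have "tcells n gens = range (\<lambda>x0. closure {x. ttype n gens x = ttype n gens x0})"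
    unfolding tcells_def by auto
  also have "\<dots> = range (cell_closure BB)"
    unfolding ttype_eq_iff closure_type_class ..
  finally show ?thesis unfolding bounded_cells_def by simp
qed

lemma chain_cell_in_bounded_cells: "valid_seq L \<Longrightarrow> chain_cell L \<in> bounded_cells n gens"
  unfolding bounded_cells_eq using chain_cell_eq_cell_closure tbounded_chain_cell by (metis (mono_tags) mem_Collect_eq rangeI)

lemma bounded_cell_subset_chain_cell:
  assumes "C \<in> bounded_cells n gens"
  shows "\<exists>L. valid_seq L \<and> C \<subseteq> chain_cell L"
proof -
  obtain x0 where C: "C = cell_closure BB x0" "tbounded (cell_closure BB x0)"
    using assms unfolding bounded_cells_eq by blast
  obtain L where L: "valid_seq L" "x0 \<in> chain_cell L"
    using exists_valid_seq_chain_cell tbounded_imp_attains_max[OF C(2)] by blast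
  then have "cell_closure BB x0 \<subseteq> cell_closure BB (chain_center L)"
    using chain_cell_eq_cell_closure[OF L(1)] unfolding cell_closure_def by blast
  then show ?thesis using C L chain_cell_eq_cell_closure[OF L(1)] by blast
qed

lemma max_bounded_cells_eq: "max_bounded_cells n gens = {chain_cell L | L. valid_seq L}"
proof (intro set_eqI iffI)
  fix C assume C: "C \<in> max_bounded_cells n gens"
  then obtain L where "valid_seq L" "C \<subseteq> chain_cell L"
    using bounded_cell_subset_chain_cell unfolding max_bounded_cells_def by blast
  then show "C \<in> {chain_cell L | L. valid_seq L}"
    using C chain_cell_in_bounded_cells unfolding max_bounded_cells_def by blast
next
  fix C assume "C \<in> {chain_cell L | L. valid_seq L}"
  then obtain L where C: "C = chain_cell L" "valid_seq L" by blast
  have "C' = C" if "C' \<in> bounded_cells n gens" "C \<subseteq> C'" for C'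
    using bounded_cell_subset_chain_cell[OF that(1)] chain_cell_subset_imp_eq[OF C(2)] that C
    by blast
  then show "C \<in> max_bounded_cells n gens"
    unfolding max_bounded_cells_def using chain_cell_in_bounded_cells C by blast
qed

lemma tdim_max_bounded_cells:
  assumes "C \<in> max_bounded_cells n gens" and "B \<in> BB"
  shows "tdim C = int CARD('e) - int (card B)"
proof -
  obtain L where L: "valid_seq L" "C = chain_cell L"
    using assms(1) unfolding max_bounded_cells_eq by blast
  then have "card (UNIV - set L) = card B" using member_card assms(2) unfolding valid_seq_def by blast
  moreover have "card B \<le> CARD('e)" using card_mono[OF finite subset_UNIV] .
  ultimately show ?thesis using L tdim_chain_cell length_valid_seq by simp
qed

lemma tpt_valid_seq_generator:
  assumes "valid_seq L"
  shows "\<exists>l\<in>{1..n}. Bs l = UNIV - set L \<and> tpt L = gens l"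
proof -
  have "UNIV - set L \<in> Bs ` {1..n}" using assms Bs_image unfolding valid_seq_def by simp
  then show ?thesis unfolding tpt_def by auto
qed

lemma Bs_nonempty: "l \<in> {1..n} \<Longrightarrow> Bs l \<noteq> {}"
  using Bs_image member_nonempty by blast

lemma ttype_zero: "ttype n gens 0 m = {l\<in>{1..n}. m \<in> Bs l}"
  using Bs_nonempty by (auto simp: ttype_neg_ind attains_max_zero)

lemma ttype_rel_interior_nth:
  assumes L: "valid_seq L" and "x \<in> rel_interior (chain_cell L)" and "p < length L"
  shows "ttype n gens x (L!p) = ttype n gens 0 (L!p) - \<Union> (ttype n gens 0 ` set (take p L))"
proof -
  obtain c where strict: "strict_chain L x c"
    using rel_interior_chain_cell_strict valid_seqD[OF L] assms(2) by blast
  have "attains_max x (Bs l) (L!p) \<longleftrightarrow> L!p \<in> Bs l \<and> (\<forall>a\<in>set (take p L). a \<notin> Bs l)"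
    if "l \<in> {1..n}" for l
    using strict_chain_attains_max_nth[OF strict Bs_nonempty[OF that] valid_seqD(1)[OF L] assms(3)] .
  then show ?thesis unfolding ttype_zero by (auto simp: ttype_neg_ind)
qed

lemma ttype_rel_interior_outside:
  assumes L: "valid_seq L" and "x \<in> rel_interior (chain_cell L)" and "j \<notin> set L"
  shows "ttype n gens x j = ttype n gens 0 j - \<Union> (ttype n gens 0 ` set L)"
proof -
  obtain c where strict: "strict_chain L x c"
    using rel_interior_chain_cell_strict valid_seqD[OF L] assms(2) by blast
  have "attains_max x (Bs l) j \<longleftrightarrow> j \<in> Bs l \<and> (\<forall>a\<in>set L. a \<notin> Bs l)"
    if "l \<in> {1..n}" for l
    using strict_chain_attains_max_outside[OF strict Bs_nonempty[OF that] assms(3)] .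
  then show ?thesis unfolding ttype_zero by (auto simp: ttype_neg_ind)
qed

end

theorem mainTheorem8:
  fixes Vs :: "'v set" and ends :: "'e::finite \<Rightarrow> 'v set"
    and n k :: nat and Bs :: "nat \<Rightarrow> 'e set"
  assumes "simple_graph Vs ends"
    and "graph_connected Vs ends"
    and "\<forall>e. \<not> is_bridge Vs ends e"
    and "bij_betw Bs {1..n} {B. spanning_tree Vs ends B}"
    and "\<forall>l\<in>{1..n}. card (Bs l) = k"
  defines "v \<equiv> (\<lambda>l. neg_ind (Bs l))"
    and "valid \<equiv> (\<lambda>is. distinct is \<and> length is = CARD('e) - k
                        \<and> spanning_tree Vs ends (UNIV - set is))"
    and "cellOf \<equiv> (\<lambda>is. tconv (insert 0 {tpt (take j is) | j. j \<in> {1..length is}}))"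
  shows "(\<forall>C\<in>max_bounded_cells n v. tdim C = int (CARD('e)) - int k)
       \<and> max_bounded_cells n v = {cellOf is | is. valid is}
       \<and> (\<forall>is. valid is \<longrightarrow>
            (\<exists>l\<in>{1..n}. Bs l = UNIV - set is \<and> tpt is = v l)
          \<and> (\<forall>x\<in>rel_interior (cellOf is).
               (\<forall>p<length is. ttype n v x (is ! p)
                   = ttype n v 0 (is ! p) - \<Union> (ttype n v 0 ` set (take p is)))
             \<and> (\<forall>j. j \<notin> set is \<longrightarrow>
                   ttype n v x j = ttype n v 0 j - \<Union> (ttype n v 0 ` set is))))"
proof -
  interpret bridgeless_graph Vs ends using assms(1-3) by unfold_locales
  have image: "Bs ` {1..n} = {B. spanning_tree Vs ends B}" using assms(4) by (simp add: bij_betw_def)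
  have card_k: "card B = k" if "spanning_tree Vs ends B" for B
  proof -
    have "B \<in> Bs ` {1..n}" using that image by simp
    then show ?thesis using assms(5) by auto
  qed
  interpret indexed_exchange_family "{B. spanning_tree Vs ends B}" n Bs
    using exchange_family_spanning_trees[OF card_k] image
    by (simp add: indexed_exchange_family_def indexed_exchange_family_axioms_def)
  have valid_iff: "valid L \<longleftrightarrow> valid_seq L" for L
    using length_valid_seq card_k unfolding valid_def valid_seq_def by auto
  have cellOf_eq: "cellOf L = chain_cell L" if "valid_seq L" for L
    using tconv_chain_vertices_eq[OF that] unfolding cellOf_def chain_vertices_def by simp
  have max_cells: "max_bounded_cells n v = {cellOf L | L. valid L}"
    unfolding v_def max_bounded_cells_eq using valid_iff cellOf_eq by metis
  obtain B0 where "spanning_tree Vs ends B0" using spanning_tree_exists by blast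
  then have "tdim C = int CARD('e) - int k" if "C \<in> max_bounded_cells n v" for C
    using tdim_max_bounded_cells[of C B0] that card_k unfolding v_def by simp
  then show ?thesis
    using max_cells tpt_valid_seq_generator unfolding v_def
    by (simp add: valid_iff cellOf_eq ttype_rel_interior_nth ttype_rel_interior_outside)
qed

end
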